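(* Let $F_1,F_2,F_3$ be smooth real functions of one variable and set $w_1=y+\sqrt3x$, $w_2=y-\sqrt3x$, $w_3=-2y$. Suppose that, identically in $(x,y)$, $$F_1'(w_1)\big(F_2(w_2)-F_3(w_3)\big)+F_2'(w_2)\big(F_3(w_3)-F_1(w_1)\big)+F_3'(w_3)\big(F_1(w_1)-F_2(w_2)\big)=0.$$ Then for the potential $V(x,y)=F_1(y+\sqrt3x)+F_2(y-\sqrt3x)+F_3(-2y)$ the function $$J=\dot x^3-3\dot x\dot y^2+3\big[F_1(y+\sqrt3x)+F_2(y-\sqrt3x)-2F_3(-2y)\big]\dot x-3\sqrt3\big[F_1(y+\sqrt3x)-F_2(y-\sqrt3x)\big]\dot y$$ is a first integral of the system $\ddot x=-V_{,x}$, $\ddot y=-V_{,y}$.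
   Context: A first integral is a function of $(t,x,y,\dot x,\dot y)$ whose total time derivative vanishes along every solution of the given equations of motion (on the domain where everything is smooth). *)

theory Defs
  imports "HOL-Analysis.Analysis"
begin

definition smooth_fun :: "(real \<Rightarrow> real) \<Rightarrow> bool" where
  "smooth_fun f \<longleftrightarrow> (\<forall>n x. ((deriv ^^ n) f) differentiable (at x))"

definition is_solution ::
  "(real \<Rightarrow> real \<Rightarrow> real) \<Rightarrow> (real \<Rightarrow> real \<Rightarrow> real) \<Rightarrow> real set \<Rightarrow>
   (real \<Rightarrow> real) \<Rightarrow> (real \<Rightarrow> real) \<Rightarrow> bool" where
  "is_solution ax ay I x y \<longleftrightarrow> open I \<and>
     (\<forall>t\<in>I. x differentiable (at t) \<and> y differentiable (at t) \<and>
            deriv x differentiable (at t) \<and> deriv y differentiable (at t) \<and>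
            deriv (deriv x) t = ax (x t) (y t) \<and>
            deriv (deriv y) t = ay (x t) (y t))"

definition first_integral ::
  "(real \<Rightarrow> real \<Rightarrow> real) \<Rightarrow> (real \<Rightarrow> real \<Rightarrow> real) \<Rightarrow>
   (real \<Rightarrow> real \<Rightarrow> real \<Rightarrow> real \<Rightarrow> real \<Rightarrow> real) \<Rightarrow> bool" where
  "first_integral ax ay J \<longleftrightarrow>
     (\<forall>I x y. is_solution ax ay I x y \<longrightarrow>
        (\<forall>t\<in>I. ((\<lambda>s. J s (x s) (y s) (deriv x s) (deriv y s)) has_real_derivative 0) (at t)))"

end

theory Submission
  imports Defs
begin

text \<open>Along a solution, the time derivative of J is a polynomial in the velocities. Once the
  accelerations are replaced by minus the gradient of V, its velocity-dependent terms cancel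
  (because sqrt 3 * sqrt 3 = 3), and what remains is -6 sqrt 3 times the left-hand side of the
  functional equation, which vanishes by hypothesis.\<close>

definition potential3 :: "(real \<Rightarrow> real) \<Rightarrow> (real \<Rightarrow> real) \<Rightarrow> (real \<Rightarrow> real) \<Rightarrow> real \<Rightarrow> real \<Rightarrow> real"
  where "potential3 F1 F2 F3 x y = F1 (y + sqrt 3 * x) + F2 (y - sqrt 3 * x) + F3 (-2 * y)"

definition cubic_integral ::
  "(real \<Rightarrow> real) \<Rightarrow> (real \<Rightarrow> real) \<Rightarrow> (real \<Rightarrow> real) \<Rightarrow> real \<Rightarrow> real \<Rightarrow> real \<Rightarrow> real \<Rightarrow> real"
  where "cubic_integral F1 F2 F3 x y xd yd = xd ^ 3 - 3 * xd * yd ^ 2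
    + 3 * (F1 (y + sqrt 3 * x) + F2 (y - sqrt 3 * x) - 2 * F3 (-2 * y)) * xd
    - 3 * sqrt 3 * (F1 (y + sqrt 3 * x) - F2 (y - sqrt 3 * x)) * yd"

definition compatibility :: "(real \<Rightarrow> real) \<Rightarrow> (real \<Rightarrow> real) \<Rightarrow> (real \<Rightarrow> real) \<Rightarrow> real \<Rightarrow> real \<Rightarrow> real"
  where "compatibility F1 F2 F3 x y =
      deriv F1 (y + sqrt 3 * x) * (F2 (y - sqrt 3 * x) - F3 (-2 * y))
    + deriv F2 (y - sqrt 3 * x) * (F3 (-2 * y) - F1 (y + sqrt 3 * x))
    + deriv F3 (-2 * y) * (F1 (y + sqrt 3 * x) - F2 (y - sqrt 3 * x))"

lemma smooth_fun_differentiable: "smooth_fun F \<Longrightarrow> F differentiable (at x)"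
  unfolding smooth_fun_def by (metis funpow_0)

lemma has_real_derivative_comp_deriv:
  assumes "F differentiable (at (g t))" and "(g has_real_derivative g') (at t)"
  shows "((\<lambda>s. F (g s)) has_real_derivative deriv F (g t) * g') (at t)"
  using DERIV_chain2[OF _ assms(2)] assms(1) by (simp add: DERIV_deriv_iff_real_differentiable)

lemma cubic_integral_derivative_identity:
  fixes a b c p q r u v :: real
  assumes "u' = - (sqrt 3 * (a - b))" and "v' = - (a + b - 2 * c)"
  shows "3 * u ^ 2 * u' - 3 * (u' * v ^ 2 + u * (2 * v * v'))
      + 3 * ((a * (v + sqrt 3 * u) + b * (v - sqrt 3 * u) - 2 * (c * (-2 * v))) * u
             + (p + q - 2 * r) * u')
      - 3 * sqrt 3 * ((a * (v + sqrt 3 * u) - b * (v - sqrt 3 * u)) * v + (p - q) * v')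
    = -6 * sqrt 3 * (a * (q - r) + b * (r - p) + c * (p - q))"
proof -
  have "sqrt 3 * sqrt 3 = (3::real)" by simp
  with assms show ?thesis by algebra
qed

context
  fixes F1 F2 F3 :: "real \<Rightarrow> real"
  assumes diff1: "\<And>z. F1 differentiable (at z)"
    and diff2: "\<And>z. F2 differentiable (at z)"
    and diff3: "\<And>z. F3 differentiable (at z)"
begin

lemma deriv_potential3_x:
  "deriv (\<lambda>u. potential3 F1 F2 F3 u b) a
     = sqrt 3 * (deriv F1 (b + sqrt 3 * a) - deriv F2 (b - sqrt 3 * a))"
proof (rule DERIV_imp_deriv)
  have "((\<lambda>u. F1 (b + sqrt 3 * u) + F2 (b - sqrt 3 * u) + F3 (-2 * b)) has_real_derivative
      deriv F1 (b + sqrt 3 * a) * (0 + sqrt 3) + deriv F2 (b - sqrt 3 * a) * (0 - sqrt 3) + 0) (at a)"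
    by (intro derivative_intros has_real_derivative_comp_deriv diff1 diff2 DERIV_cmult_Id)
  then show "((\<lambda>u. potential3 F1 F2 F3 u b) has_real_derivative
      sqrt 3 * (deriv F1 (b + sqrt 3 * a) - deriv F2 (b - sqrt 3 * a))) (at a)"
    by (simp add: potential3_def algebra_simps)
qed

lemma deriv_potential3_y:
  "deriv (\<lambda>v. potential3 F1 F2 F3 a v) b
     = deriv F1 (b + sqrt 3 * a) + deriv F2 (b - sqrt 3 * a) - 2 * deriv F3 (-2 * b)"
proof (rule DERIV_imp_deriv)
  have "((\<lambda>v. F1 (v + sqrt 3 * a) + F2 (v - sqrt 3 * a) + F3 (-2 * v)) has_real_derivative
      deriv F1 (b + sqrt 3 * a) * (1 + 0) + deriv F2 (b - sqrt 3 * a) * (1 - 0)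
      + deriv F3 (-2 * b) * (-2)) (at b)"
    by (intro derivative_intros has_real_derivative_comp_deriv diff1 diff2 diff3 DERIV_cmult_Id)
  then show "((\<lambda>v. potential3 F1 F2 F3 a v) has_real_derivative
      deriv F1 (b + sqrt 3 * a) + deriv F2 (b - sqrt 3 * a) - 2 * deriv F3 (-2 * b)) (at b)"
    by (simp add: potential3_def algebra_simps)
qed

lemma has_real_derivative_cubic_integral_path:
  fixes x y u v :: "real \<Rightarrow> real"
  assumes x: "(x has_real_derivative u t) (at t)" and y: "(y has_real_derivative v t) (at t)"
    and u: "(u has_real_derivative u') (at t)" and v: "(v has_real_derivative v') (at t)"
  defines "a \<equiv> deriv F1 (y t + sqrt 3 * x t)" and "b \<equiv> deriv F2 (y t - sqrt 3 * x t)"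
    and "c \<equiv> deriv F3 (-2 * y t)"
    and "p \<equiv> F1 (y t + sqrt 3 * x t)" and "q \<equiv> F2 (y t - sqrt 3 * x t)" and "r \<equiv> F3 (-2 * y t)"
  shows "((\<lambda>s. cubic_integral F1 F2 F3 (x s) (y s) (u s) (v s)) has_real_derivative
      3 * u t ^ 2 * u' - 3 * (u' * v t ^ 2 + u t * (2 * v t * v'))
      + 3 * ((a * (v t + sqrt 3 * u t) + b * (v t - sqrt 3 * u t) - 2 * (c * (-2 * v t))) * u t
             + (p + q - 2 * r) * u')
      - 3 * sqrt 3 * ((a * (v t + sqrt 3 * u t) - b * (v t - sqrt 3 * u t)) * v t
             + (p - q) * v')) (at t)"
proof -
  have comp: "((\<lambda>s. F1 (y s + sqrt 3 * x s)) has_real_derivative a * (v t + sqrt 3 * u t)) (at t)"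
    "((\<lambda>s. F2 (y s - sqrt 3 * x s)) has_real_derivative b * (v t - sqrt 3 * u t)) (at t)"
    "((\<lambda>s. F3 (-2 * y s)) has_real_derivative c * (-2 * v t)) (at t)"
    unfolding a_def b_def c_def
    by (intro has_real_derivative_comp_deriv diff1 diff2 diff3 derivative_intros DERIV_cmult x y)+
  show ?thesis
    unfolding cubic_integral_def p_def q_def r_def
    by (rule derivative_eq_intros comp x y u v refl | simp add: algebra_simps power2_eq_square)+
qed

lemma has_real_derivative_cubic_integral_solution:
  assumes sol: "is_solution (\<lambda>x y. - deriv (\<lambda>u. potential3 F1 F2 F3 u y) x)
                  (\<lambda>x y. - deriv (\<lambda>v. potential3 F1 F2 F3 x v) y) I x y"
    and "t \<in> I"
  shows "((\<lambda>s. cubic_integral F1 F2 F3 (x s) (y s) (deriv x s) (deriv y s)) has_real_derivative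
      -6 * sqrt 3 * compatibility F1 F2 F3 (x t) (y t)) (at t)"
proof -
  let ?a = "deriv F1 (y t + sqrt 3 * x t)"
  let ?b = "deriv F2 (y t - sqrt 3 * x t)"
  let ?c = "deriv F3 (-2 * y t)"
  have diff: "x differentiable (at t)" "y differentiable (at t)"
    "deriv x differentiable (at t)" "deriv y differentiable (at t)"
    and acc: "deriv (deriv x) t = - (sqrt 3 * (?a - ?b))"
      "deriv (deriv y) t = - (?a + ?b - 2 * ?c)"
    using sol \<open>t \<in> I\<close> unfolding is_solution_def
    by (auto simp: deriv_potential3_x deriv_potential3_y)
  from diff have "(x has_real_derivative deriv x t) (at t)" "(y has_real_derivative deriv y t) (at t)"
    "(deriv x has_real_derivative deriv (deriv x) t) (at t)"
    "(deriv y has_real_derivative deriv (deriv y) t) (at t)"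
    by (simp_all only: DERIV_deriv_iff_real_differentiable)
  from has_real_derivative_cubic_integral_path[OF this]
  show ?thesis
    unfolding cubic_integral_derivative_identity[OF acc] compatibility_def .
qed

end

theorem mainTheorem2:
  fixes F1 F2 F3 :: "real \<Rightarrow> real"
  assumes "smooth_fun F1" and "smooth_fun F2" and "smooth_fun F3"
    and "\<forall>x y. deriv F1 (y + sqrt 3 * x) * (F2 (y - sqrt 3 * x) - F3 (-2 * y))
              + deriv F2 (y - sqrt 3 * x) * (F3 (-2 * y) - F1 (y + sqrt 3 * x))
              + deriv F3 (-2 * y) * (F1 (y + sqrt 3 * x) - F2 (y - sqrt 3 * x)) = 0"
  defines "V \<equiv> (\<lambda>x y. F1 (y + sqrt 3 * x) + F2 (y - sqrt 3 * x) + F3 (-2 * y))"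
  shows "first_integral
           (\<lambda>x y. - deriv (\<lambda>u. V u y) x)
           (\<lambda>x y. - deriv (\<lambda>v. V x v) y)
           (\<lambda>t x y xd yd. xd ^ 3 - 3 * xd * yd ^ 2
              + 3 * (F1 (y + sqrt 3 * x) + F2 (y - sqrt 3 * x) - 2 * F3 (-2 * y)) * xd
              - 3 * sqrt 3 * (F1 (y + sqrt 3 * x) - F2 (y - sqrt 3 * x)) * yd)"
proof -
  have "V = potential3 F1 F2 F3"
    unfolding V_def potential3_def by (intro ext) simp
  moreover have "compatibility F1 F2 F3 x y = 0" for x y
    using assms(4) unfolding compatibility_def by blast
  moreover note has_real_derivative_cubic_integral_solution[of F1 F2 F3]
    smooth_fun_differentiable[OF assms(1)] smooth_fun_differentiable[OF assms(2)]
    smooth_fun_differentiable[OF assms(3)]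
  ultimately show ?thesis
    unfolding first_integral_def cubic_integral_def[symmetric] by fastforce
qed

end
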